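(* Let $G=(V\cup\{O\},E)$ be a connected, unweighted, undirected graph, where $V$ is a set of $n$ terminals and $O\notin V$ is the depot, and let $k\in[1,n]$ be an integer tour capacity. Let $\mathrm{opt}$ denote the minimum cost of a feasible solution to the graphic CVRP on this instance, and let $\mathrm{rad}=\frac{2}{k}\sum_{v\in V}\mathrm{dist}(v)$. Then \[ \mathrm{opt}\geq \mathrm{rad}+\frac{n}{2}-\frac{n}{2k^2}. \]
   Context: For $v\in V$, $\mathrm{dist}(v)$ is the number of edges on a shortest $v$-to-$O$ path in $G$. A tour is a walk $z_1z_2\dots z_p$ in $G$ with $z_1=z_p=O$ and $(z_i,z_{i+1})\in E$ for all $i\in[1,p-1]$; its cost is $p-1$ (the number of edges traversed, with multiplicity). In the graphic CVRP, each terminal has unit demand; a feasible solution is a set of tours, each starting and ending at $O$, together with an assignment of each terminal to exactly one tour that visits it (the tour "covers" its demand), such that each tour covers at most $k$ terminals. The cost of a solution is the total cost of its tours, and the goal is to minimize this cost. *)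

theory Defs
  imports Complex_Main
begin

text \<open>Graph: vertex set V \<union> {O} (depot O written dep), undirected edges as a symmetric irreflexive relation E.\<close>

definition is_walk :: "('a \<times> 'a) set \<Rightarrow> 'a list \<Rightarrow> bool" where
  "is_walk E zs \<longleftrightarrow> zs \<noteq> [] \<and> (\<forall>i. Suc i < length zs \<longrightarrow> (zs ! i, zs ! Suc i) \<in> E)"

definition dist :: "('a \<times> 'a) set \<Rightarrow> 'a \<Rightarrow> 'a \<Rightarrow> nat" where
  "dist E dep v = (LEAST m. \<exists>zs. is_walk E zs \<and> hd zs = v \<and> last zs = dep \<and> length zs = Suc m)"

definition is_tour :: "('a \<times> 'a) set \<Rightarrow> 'a \<Rightarrow> 'a list \<Rightarrow> bool" where
  "is_tour E dep zs \<longleftrightarrow> is_walk E zs \<and> hd zs = dep \<and> last zs = dep"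

definition tour_cost :: "'a list \<Rightarrow> nat" where
  "tour_cost zs = length zs - 1"

definition feasible_solution ::
  "('a \<times> 'a) set \<Rightarrow> 'a \<Rightarrow> 'a set \<Rightarrow> nat \<Rightarrow> 'a list list \<Rightarrow> ('a \<Rightarrow> nat) \<Rightarrow> bool" where
  "feasible_solution E dep V k tours asg \<longleftrightarrow>
     (\<forall>t\<in>set tours. is_tour E dep t) \<and>
     (\<forall>v\<in>V. asg v < length tours \<and> v \<in> set (tours ! asg v)) \<and>
     (\<forall>i<length tours. card {v\<in>V. asg v = i} \<le> k)"

definition solution_cost :: "'a list list \<Rightarrow> nat" where
  "solution_cost tours = (\<Sum>t\<leftarrow>tours. tour_cost t)"

definition cvrp_opt :: "('a \<times> 'a) set \<Rightarrow> 'a \<Rightarrow> 'a set \<Rightarrow> nat \<Rightarrow> nat" where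
  "cvrp_opt E dep V k =
     (LEAST c. \<exists>tours asg. feasible_solution E dep V k tours asg \<and> solution_cost tours = c)"

definition connected_graph :: "'a set \<Rightarrow> ('a \<times> 'a) set \<Rightarrow> bool" where
  "connected_graph W E \<longleftrightarrow> (\<forall>u\<in>W. \<forall>w\<in>W. (u, w) \<in> E\<^sup>*)"

end

theory Submission
  imports Defs
begin

(* A tour of cost c visits each terminal v it serves at some position p with 0 < p < c; its
   prefix and suffix are walks from v to the depot, so dist v \<le> min p (c - p). For s distinct
   positions, 4 * \<Sum> min p (c - p) \<le> 2sc - s^2 + 1, and with s \<le> k and s < c this rearranges to
   c \<ge> (2/k) \<Sum> dist v + s/2 - s/(2k^2). Summing over the tours of an optimal solution gives the
   bound. *)

lemma is_walk_iff_successively: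
  "is_walk E zs \<longleftrightarrow> zs \<noteq> [] \<and> successively (\<lambda>x y. (x, y) \<in> E) zs"
  by (auto simp: is_walk_def successively_conv_nth)

lemma is_walk_rev:
  assumes "sym E" "is_walk E zs"
  shows "is_walk E (rev zs)"
proof -
  have "successively (\<lambda>x y. (y, x) \<in> E) zs"
    using assms(2) by (auto simp: is_walk_iff_successively intro: successively_mono symD[OF \<open>sym E\<close>])
  then show ?thesis
    using assms(2) by (simp add: is_walk_iff_successively)
qed

lemma is_walk_append:
  "is_walk E xs \<Longrightarrow> is_walk E ys \<Longrightarrow> (last xs, hd ys) \<in> E \<Longrightarrow> is_walk E (xs @ ys)"
  by (simp add: is_walk_iff_successively successively_append_iff)

lemma is_walk_appendD:
  assumes "is_walk E (xs @ ys)"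
  shows "xs \<noteq> [] \<Longrightarrow> is_walk E xs" and "ys \<noteq> [] \<Longrightarrow> is_walk E ys"
  using assms by (simp_all add: is_walk_iff_successively successively_append_iff)

lemma is_walk_join:
  "is_walk E xs \<Longrightarrow> is_walk E ys \<Longrightarrow> last xs = hd ys \<Longrightarrow> is_walk E (xs @ tl ys)"
  by (cases ys) (auto simp: is_walk_iff_successively successively_append_iff successively_Cons)

lemma is_tour_there_and_back:
  assumes "sym E" "is_walk E zs" "hd zs = dep"
  shows "is_tour E dep (zs @ tl (rev zs))"
proof -
  have "zs \<noteq> []"
    using assms(2) by (simp add: is_walk_def)
  moreover have "last (zs @ tl (rev zs)) = hd zs"
    using \<open>zs \<noteq> []\<close> by (cases "tl (rev zs) = []") (auto simp: last_tl last_rev hd_rev dest: tl_Nil[THEN iffD1])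
  ultimately show ?thesis
    using assms is_walk_join[OF assms(2) is_walk_rev[OF assms(1,2)]]
    by (simp add: is_tour_def hd_rev last_rev)
qed

lemma rtrancl_imp_walk:
  assumes "(u, v) \<in> E\<^sup>*"
  obtains zs where "is_walk E zs" "hd zs = u" "last zs = v"
  using assms
proof (induction arbitrary: thesis rule: rtrancl_induct)
  case base
  show ?case
    by (rule base[of "[u]"]) (simp_all add: is_walk_def)
next
  case (step y z)
  obtain zs where "is_walk E zs" "hd zs = u" "last zs = y"
    using step.IH by blast
  moreover have "is_walk E [z]"
    by (simp add: is_walk_def)
  ultimately have "is_walk E (zs @ [z])"
    using \<open>(y, z) \<in> E\<close> by (simp add: is_walk_append)
  then show ?case
    by (rule step.prems) (use \<open>hd zs = u\<close> \<open>is_walk E zs\<close> in \<open>auto simp: is_walk_def\<close>)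
qed

lemma dist_le_walk_length:
  assumes "is_walk E zs" "hd zs = v" "last zs = dep"
  shows "dist E dep v \<le> length zs - 1"
  unfolding dist_def
  by (rule Least_le) (use assms in \<open>auto simp: is_walk_def\<close>)

lemma dist_pos:
  assumes "is_walk E zs" "hd zs = v" "last zs = dep" "v \<noteq> dep"
  shows "0 < dist E dep v"
proof -
  have "\<exists>ys. is_walk E ys \<and> hd ys = v \<and> last ys = dep \<and> length ys = Suc (dist E dep v)"
    unfolding dist_def by (rule LeastI[of _ "length zs - 1"]) (use assms in \<open>auto simp: is_walk_def\<close>)
  then obtain ys where ys: "hd ys = v" "last ys = dep" "length ys = Suc (dist E dep v)"
    by blast
  show ?thesis
  proof (rule ccontr)
    assume "\<not> 0 < dist E dep v"
    then have "length ys = 1"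
      using ys(3) by simp
    then have "hd ys = last ys"
      by (cases ys) auto
    with ys \<open>v \<noteq> dep\<close> show False
      by simp
  qed
qed

lemma dist_le_tour_position:
  assumes "sym E" "is_tour E dep t" "i < length t"
  shows "dist E dep (t ! i) \<le> i" "dist E dep (t ! i) \<le> tour_cost t - i"
    and "t ! i \<noteq> dep \<Longrightarrow> 0 < dist E dep (t ! i)"
proof -
  have walk: "is_walk E t" and ends: "hd t = dep" "last t = dep"
    using assms(2) by (auto simp: is_tour_def)
  have suffix: "is_walk E (drop i t)"
    using is_walk_appendD(2)[of E "take i t" "drop i t"] walk assms(3) by simp
  have suffix_ends: "hd (drop i t) = t ! i" "last (drop i t) = dep"
    using assms(3) ends by (auto simp: hd_drop_conv_nth)
  show "dist E dep (t ! i) \<le> tour_cost t - i"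
    using dist_le_walk_length[OF suffix suffix_ends] by (simp add: tour_cost_def)
  show "t ! i \<noteq> dep \<Longrightarrow> 0 < dist E dep (t ! i)"
    using dist_pos[OF suffix suffix_ends] .
  have "take (Suc i) t \<noteq> []"
    using assms(3) by (cases t) simp_all
  then have prefix: "is_walk E (rev (take (Suc i) t))"
    using is_walk_appendD(1)[of E "take (Suc i) t" "drop (Suc i) t"] walk assms(1)
    by (simp add: is_walk_rev)
  have prefix_ends: "hd (rev (take (Suc i) t)) = t ! i" "last (rev (take (Suc i) t)) = dep"
    using assms(3) ends by (auto simp: take_Suc_conv_app_nth hd_conv_nth last_rev)
  show "dist E dep (t ! i) \<le> i"
    using dist_le_walk_length[OF prefix prefix_ends] assms(3) by simp
qed

lemma sum_dist_to_ends_le: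
  fixes P :: "nat set"
  assumes "finite P" "P \<subseteq> {..c}"
  shows "4 * (\<Sum>p\<in>P. min p (c - p)) + card P ^ 2 \<le> 2 * card P * c + 1"
  using assms
proof (induction "card P" arbitrary: P rule: less_induct)
  case less
  show ?case
  proof (cases "card P \<le> 1")
    case True
    then consider "P = {}" | p where "P = {p}"
      using less.prems(1) by (auto simp: le_Suc_eq card_1_singleton_iff)
    then show ?thesis
      by cases auto
  next
    case False
    define a where "a = Min P"
    define b where "b = Max P"
    define Q where "Q = P - {a, b}"
    have "P \<noteq> {}"
      using False by auto
    then have ab: "a \<in> P" "b \<in> P" "P \<subseteq> {a..b}"
      using less.prems(1) by (auto simp: a_def b_def)
    have "card P \<le> card {a..b}"
      using ab(3) by (rule card_mono[rotated]) simp
    moreover have "a \<le> b"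
      using ab by auto
    ultimately have spread: "card P + a \<le> b + 1"
      by simp
    then have "a \<noteq> b"
      using False by auto
    have card_Q: "card P = card Q + 2"
      using ab \<open>a \<noteq> b\<close> less.prems(1) False by (simp add: Q_def card_Diff_subset)
    have IH: "4 * (\<Sum>p\<in>Q. min p (c - p)) + card Q ^ 2 \<le> 2 * card Q * c + 1"
      using less card_Q by (intro less.hyps) (auto simp: Q_def)
    have "(\<Sum>p\<in>P. min p (c - p)) = min a (c - a) + min b (c - b) + (\<Sum>p\<in>Q. min p (c - p))"
      using ab \<open>a \<noteq> b\<close> less.prems(1)
      by (simp add: Q_def sum.remove[of P a] sum.remove[of "P - {a}" b] Diff_insert2 [symmetric])
    \<comment> \<open>the extreme positions are at least card P - 1 apart\<close>
    moreover have "min a (c - a) + min b (c - b) + card Q + 1 \<le> c"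
      using ab less.prems(2) spread card_Q by auto
    ultimately show ?thesis
      using IH unfolding card_Q by (simp add: power2_eq_square algebra_simps)
  qed
qed

lemma tour_dist_sum_bound:
  assumes "sym E" "is_tour E dep t" "S \<subseteq> set t" "dep \<notin> S"
  shows "4 * (\<Sum>v\<in>S. dist E dep v) + card S ^ 2 \<le> 2 * card S * tour_cost t + 1"
    and "S \<noteq> {} \<Longrightarrow> card S < tour_cost t"
proof -
  let ?c = "tour_cost t"
  have "\<forall>v\<in>S. \<exists>i. i < length t \<and> t ! i = v"
    using assms(3) by (auto simp: in_set_conv_nth)
  from bchoice[OF this] obtain pos where pos: "\<And>v. v \<in> S \<Longrightarrow> pos v < length t \<and> t ! pos v = v"
    by blast
  have inj: "inj_on pos S"
    by (rule inj_onI) (metis pos)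
  have dist_le: "dist E dep v \<le> min (pos v) (?c - pos v)" and interior: "pos v \<in> {1..<?c}"
    if "v \<in> S" for v
  proof -
    have "t ! pos v \<noteq> dep"
      using pos that assms(4) by auto
    then have "0 < dist E dep v" "dist E dep v \<le> pos v" "dist E dep v \<le> ?c - pos v"
      using dist_le_tour_position[OF assms(1,2), of "pos v"] pos[OF that] by simp_all
    then show "dist E dep v \<le> min (pos v) (?c - pos v)" "pos v \<in> {1..<?c}"
      by auto
  qed
  have card_pos: "card (pos ` S) = card S"
    using inj by (rule card_image)
  have "finite S"
    using assms(3) finite_subset by blast
  then have "(\<Sum>v\<in>S. dist E dep v) \<le> (\<Sum>p\<in>pos ` S. min p (?c - p))"
    using dist_le by (simp add: sum.reindex[OF inj] sum_mono)
  moreover have "4 * (\<Sum>p\<in>pos ` S. min p (?c - p)) + card S ^ 2 \<le> 2 * card S * ?c + 1"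
    using sum_dist_to_ends_le[of "pos ` S" ?c] interior \<open>finite S\<close> card_pos by fastforce
  ultimately show "4 * (\<Sum>v\<in>S. dist E dep v) + card S ^ 2 \<le> 2 * card S * ?c + 1"
    by linarith
  have "card S \<le> ?c - 1"
    using card_mono[of "{1..<?c}" "pos ` S"] interior card_pos by force
  then show "S \<noteq> {} \<Longrightarrow> card S < ?c"
    using \<open>finite S\<close> card_gt_0_iff[of S] by linarith
qed

lemma tour_bound_arith:
  fixes D s c k :: real
  assumes "1 \<le> k" "0 \<le> s" "s \<le> k" "s + 1 \<le> c" "4 * D + s^2 \<le> 2 * s * c + 1"
  shows "2 / k * D + s / 2 - s / (2 * k^2) \<le> c"
proof -
  \<comment> \<open>multiplied by 2k^2, the claim says (k - s)(2kc - ks - 1) \<ge> 0\<close>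
  have "k * s + k \<le> k * c" "0 \<le> k * s"
    using assms mult_left_mono[OF assms(4), of k] by (simp_all add: algebra_simps)
  then have "0 \<le> (k - s) * (2 * k * c - k * s - 1)"
    using assms by (intro mult_nonneg_nonneg) linarith+
  then have "4 * k * D + k^2 * s - s \<le> 2 * k^2 * c"
    using assms mult_left_mono[OF assms(5), of k] by (simp add: power2_eq_square algebra_simps)
  then have "(4 * k * D + k^2 * s - s) / (2 * k^2) \<le> c"
    using assms(1) by (simp add: divide_le_eq mult.commute)
  moreover have "2 / k * D + s / 2 - s / (2 * k^2) = (4 * k * D + k^2 * s - s) / (2 * k^2)"
    using assms(1) by (simp add: field_simps power2_eq_square)
  ultimately show ?thesis
    by simp
qed

lemma tour_cost_lower_bound:
  assumes "sym E" "is_tour E dep t" "S \<subseteq> set t" "dep \<notin> S" "card S \<le> k" "1 \<le> k"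
  shows "2 / real k * (\<Sum>v\<in>S. real (dist E dep v)) + real (card S) / 2
           - real (card S) / (2 * real k ^ 2) \<le> real (tour_cost t)"
proof (cases "S = {}")
  case False
  have "real (4 * (\<Sum>v\<in>S. dist E dep v) + card S ^ 2) \<le> real (2 * card S * tour_cost t + 1)"
    using tour_dist_sum_bound(1)[OF assms(1-4)] by (rule of_nat_mono)
  moreover have "real (card S) + 1 \<le> real (tour_cost t)"
    using tour_dist_sum_bound(2)[OF assms(1-4) False] by simp
  ultimately show ?thesis
    using assms(5,6) by (intro tour_bound_arith) simp_all
qed simp

lemma solution_cost_lower_bound:
  assumes "sym E" "dep \<notin> V" "finite V" "1 \<le> k" "feasible_solution E dep V k tours asg"
  shows "2 / real k * (\<Sum>v\<in>V. real (dist E dep v)) + real (card V) / 2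
           - real (card V) / (2 * real k ^ 2) \<le> real (solution_cost tours)"
proof -
  define share where "share v = 2 / real k * real (dist E dep v) + 1 / 2 - 1 / (2 * real k ^ 2)" for v
  have share_sum: "(\<Sum>v\<in>S. share v) = 2 / real k * (\<Sum>v\<in>S. real (dist E dep v)) + real (card S) / 2
           - real (card S) / (2 * real k ^ 2)" for S
    unfolding share_def by (simp add: sum.distrib sum_subtractf sum_distrib_left)
  have "(\<Sum>v\<in>{v\<in>V. asg v = i}. share v) \<le> real (tour_cost (tours ! i))" if "i < length tours" for i
    unfolding share_sum using assms that
    by (intro tour_cost_lower_bound) (auto simp: feasible_solution_def)
  then have "(\<Sum>i<length tours. \<Sum>v\<in>{v\<in>V. asg v = i}. share v) \<le> (\<Sum>i<length tours. real (tour_cost (tours ! i)))"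
    by (intro sum_mono) simp
  moreover have "(\<Sum>i<length tours. \<Sum>v\<in>{v\<in>V. asg v = i}. share v) = (\<Sum>v\<in>V. share v)"
    using sum.group[OF assms(3), of "{..<length tours}" asg share] assms(5)
    by (auto simp: feasible_solution_def)
  moreover have "(\<Sum>i<length tours. real (tour_cost (tours ! i))) = real (solution_cost tours)"
    by (simp add: solution_cost_def sum_list_sum_nth atLeast0LessThan)
  ultimately show ?thesis
    by (simp add: share_sum)
qed

lemma feasible_solution_exists:
  assumes "sym E" "finite V" "1 \<le> k" "\<And>v. v \<in> V \<Longrightarrow> (dep, v) \<in> E\<^sup>*"
  obtains tours asg where "feasible_solution E dep V k tours asg"
proof -
  have "\<forall>v\<in>V. \<exists>t. is_tour E dep t \<and> v \<in> set t"
  proof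
    fix v
    assume v: "v \<in> V"
    obtain zs where zs: "is_walk E zs" "hd zs = dep" "last zs = v"
      using rtrancl_imp_walk[OF assms(4)[OF v]] .
    then have "v \<in> set (zs @ tl (rev zs))"
      by (auto simp: is_walk_def)
    then show "\<exists>t. is_tour E dep t \<and> v \<in> set t"
      using is_tour_there_and_back[OF assms(1) zs(1,2)] by blast
  qed
  from bchoice[OF this] obtain tour where tour: "\<And>v. v \<in> V \<Longrightarrow> is_tour E dep (tour v) \<and> v \<in> set (tour v)"
    by blast
  obtain xs where xs: "set xs = V"
    using finite_list[OF assms(2)] by blast
  have "\<forall>v\<in>V. \<exists>i. i < length xs \<and> xs ! i = v"
    using xs by (auto simp: in_set_conv_nth)
  from bchoice[OF this] obtain asg where asg: "\<And>v. v \<in> V \<Longrightarrow> asg v < length xs \<and> xs ! asg v = v"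
    by blast
  have "card {v \<in> V. asg v = i} \<le> card {xs ! i}" for i
    by (rule card_mono) (use asg in auto)
  then have "card {v \<in> V. asg v = i} \<le> k" for i
    using assms(3) le_trans by fastforce
  then have "feasible_solution E dep V k (map tour xs) asg"
    using tour asg xs by (auto simp: feasible_solution_def)
  then show ?thesis ..
qed

lemma cvrp_opt_attained:
  assumes "feasible_solution E dep V k tours asg"
  obtains tours' asg' where "feasible_solution E dep V k tours' asg'"
    and "solution_cost tours' = cvrp_opt E dep V k"
proof -
  have "\<exists>tours' asg'. feasible_solution E dep V k tours' asg' \<and> solution_cost tours' = cvrp_opt E dep V k"
    unfolding cvrp_opt_def by (rule LeastI[of _ "solution_cost tours"]) (use assms in blast)
  then show ?thesis
    using that by blast
qed

theorem mainTheorem1: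
  fixes V :: "'a set" and dep :: 'a and E :: "('a \<times> 'a) set" and k :: nat
  assumes "finite V"
    and "dep \<notin> V"
    and "E \<subseteq> (V \<union> {dep}) \<times> (V \<union> {dep})"
    and "sym E"
    and "irrefl E"
    and "connected_graph (V \<union> {dep}) E"
    and "1 \<le> k" and "k \<le> card V"
  shows "real (cvrp_opt E dep V k) \<ge>
           (2 / real k) * (\<Sum>v\<in>V. real (dist E dep v)) + real (card V) / 2
           - real (card V) / (2 * real k ^ 2)"
proof -
  have "\<And>v. v \<in> V \<Longrightarrow> (dep, v) \<in> E\<^sup>*"
    using assms(6) by (simp add: connected_graph_def)
  then obtain tours asg where "feasible_solution E dep V k tours asg"
    using feasible_solution_exists[OF assms(4,1,7)] by blast
  then obtain tours' asg' where opt: "feasible_solution E dep V k tours' asg'"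
    "solution_cost tours' = cvrp_opt E dep V k"
    by (rule cvrp_opt_attained)
  show ?thesis
    using solution_cost_lower_bound[OF assms(4,2,1,7) opt(1)] opt(2) by simp
qed

end
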